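(* Let $\mathbf{w}_1,\dots,\mathbf{w}_6:\mathbb{R}\to\mathbb{R}^7$ be differentiable functions satisfying $$\tfrac{d\mathbf{w}_1}{dt}=2\mathbf{w}_2\times\mathbf{w}_3,\quad \tfrac{d\mathbf{w}_2}{dt}=2\mathbf{w}_1\times\mathbf{w}_3,\quad \tfrac{d\mathbf{w}_3}{dt}=-2\mathbf{w}_1\times\mathbf{w}_2,$$ $$\tfrac{d\mathbf{w}_4}{dt}=\mathbf{w}_1\times\mathbf{w}_5+\mathbf{w}_2\times\mathbf{w}_5-\mathbf{w}_3\times\mathbf{w}_4,\quad \tfrac{d\mathbf{w}_5}{dt}=-\mathbf{w}_1\times\mathbf{w}_4+\mathbf{w}_2\times\mathbf{w}_4+\mathbf{w}_3\times\mathbf{w}_5,\quad \tfrac{d\mathbf{w}_6}{dt}=\mathbf{w}_4\times\mathbf{w}_5 .$$ Then $$M=\Big\{\tfrac12(y_1^2+y_2^2)\mathbf{w}_1(t)+\tfrac12(y_1^2-y_2^2)\mathbf{w}_2(t)+y_1y_2\mathbf{w}_3(t)+y_1\mathbf{w}_4(t)+y_2\mathbf{w}_5(t)+\mathbf{w}_6(t):y_1,y_2,t\in\mathbb{R}\Big\}$$ is an associative 3-fold in $\mathbb{R}^7$ wherever it is nonsingular.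
   Context: Let $(x_1,\dots,x_7)$ be coordinates on $\mathbb{R}^7$ with Euclidean metric $g$, and write $dx_{ijk}=dx_i\wedge dx_j\wedge dx_k$. Define $\varphi=dx_{123}+dx_{145}+dx_{167}+dx_{246}-dx_{257}-dx_{347}-dx_{356}$. The cross product $\times$ on $\mathbb{R}^7$ is defined by $g(u\times v,w)=\varphi(u,v,w)$ for all $u,v,w\in\mathbb{R}^7$. An oriented 3-dimensional (immersed) submanifold $N\subseteq\mathbb{R}^7$ is an associative 3-fold if $\varphi|_{T_xN}=\mathrm{vol}_{T_xN}$ for all $x\in N$. *)

theory Defs
  imports "HOL-Analysis.Analysis"
begin

text \<open>Euclidean R^7 is \<open>real^7\<close>; coordinate x_i is \<open>x $ i\<close> for i = 1..7
  (the seven numerals 1,...,7 denote the seven distinct elements of the index type 7).\<close>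

definition dx :: "7 \<Rightarrow> 7 \<Rightarrow> 7 \<Rightarrow> real^7 \<Rightarrow> real^7 \<Rightarrow> real^7 \<Rightarrow> real" where
  "dx i j k u v w =
     u$i * (v$j * w$k - v$k * w$j)
   - u$j * (v$i * w$k - v$k * w$i)
   + u$k * (v$i * w$j - v$j * w$i)"

definition phi :: "real^7 \<Rightarrow> real^7 \<Rightarrow> real^7 \<Rightarrow> real" where
  "phi u v w = dx 1 2 3 u v w + dx 1 4 5 u v w + dx 1 6 7 u v w + dx 2 4 6 u v w
              - dx 2 5 7 u v w - dx 3 4 7 u v w - dx 3 5 6 u v w"

text \<open>Cross product: g(u \<times> v, w) = phi(u,v,w).\<close>
definition cross7 :: "real^7 \<Rightarrow> real^7 \<Rightarrow> real^7" (infixl "\<times>\<^sub>7" 70) where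
  "cross7 u v = (\<chi> k. phi u v (axis k 1))"

text \<open>Gram determinant of three vectors = squared 3-volume of the parallelepiped.\<close>
definition gram3 :: "real^7 \<Rightarrow> real^7 \<Rightarrow> real^7 \<Rightarrow> real" where
  "gram3 u v w =
     (u\<bullet>u) * ((v\<bullet>v) * (w\<bullet>w) - (v\<bullet>w) * (w\<bullet>v))
   - (u\<bullet>v) * ((v\<bullet>u) * (w\<bullet>w) - (v\<bullet>w) * (w\<bullet>u))
   + (u\<bullet>w) * ((v\<bullet>u) * (w\<bullet>v) - (v\<bullet>v) * (w\<bullet>u))"

text \<open>The 3-plane spanned by linearly independent u, v, w is associative (for a suitable
  orientation): phi restricted to it equals the volume form, i.e.
  phi(u,v,w) = +- vol(u,v,w) = +- sqrt(gram).\<close>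
definition associative_plane :: "real^7 \<Rightarrow> real^7 \<Rightarrow> real^7 \<Rightarrow> bool" where
  "associative_plane u v w \<longleftrightarrow> \<bar>phi u v w\<bar> = sqrt (gram3 u v w)"

end

theory Submission
  imports Defs
begin

text \<open>The ODE system is built so that the derivative of the parametrisation \<open>F\<close> in \<open>t\<close> is the
  cross product of its derivatives in \<open>y\<^sub>1\<close> and \<open>y\<^sub>2\<close>; this is a polynomial identity that only uses
  bilinearity and antisymmetry of \<open>\<times>\<^sub>7\<close>. Every plane spanned by \<open>u, v, u \<times>\<^sub>7 v\<close> is associative:
  \<open>phi u v (u \<times>\<^sub>7 v) = \<bar>u \<times>\<^sub>7 v\<bar>\<^sup>2\<close>, while \<open>u \<times>\<^sub>7 v\<close> is orthogonal to \<open>u\<close> and \<open>v\<close>, so by the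
  Lagrange identity \<open>\<bar>u \<times>\<^sub>7 v\<bar>\<^sup>2 = \<bar>u\<bar>\<^sup>2\<bar>v\<bar>\<^sup>2 - (u \<bullet> v)\<^sup>2\<close> the Gram determinant is \<open>\<bar>u \<times>\<^sub>7 v\<bar>\<^sup>4\<close>.\<close>

lemma UNIV_7: "(UNIV :: 7 set) = {1, 2, 3, 4, 5, 6, 7}"
  by (rule card_subset_eq[symmetric]) simp_all

lemma all_7: "(\<forall>k :: 7. P k) \<longleftrightarrow> P 1 \<and> P 2 \<and> P 3 \<and> P 4 \<and> P 5 \<and> P 6 \<and> P 7"
  by (metis UNIV_7 UNIV_I insertE empty_iff)

lemma vec7_eq_iff:
  "(x :: real^7) = y \<longleftrightarrow>
     x$1 = y$1 \<and> x$2 = y$2 \<and> x$3 = y$3 \<and> x$4 = y$4 \<and> x$5 = y$5 \<and> x$6 = y$6 \<and> x$7 = y$7"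
  unfolding vec_eq_iff all_7 ..

lemma inner_vec7:
  "(x :: real^7) \<bullet> y = x$1*y$1 + x$2*y$2 + x$3*y$3 + x$4*y$4 + x$5*y$5 + x$6*y$6 + x$7*y$7"
  unfolding inner_vec_def UNIV_7 by simp

lemma cross7_nth: "(u \<times>\<^sub>7 v) $ k = phi u v (axis k 1)"
  by (simp add: cross7_def)

lemmas cross7_coordinates = cross7_nth phi_def dx_def axis_def inner_vec7

lemma phi_eq_inner_cross7: "phi u v w = (u \<times>\<^sub>7 v) \<bullet> w"
  by (simp add: cross7_coordinates) algebra

lemma inner_cross7_left: "(u \<times>\<^sub>7 v) \<bullet> u = 0"
  by (simp add: cross7_coordinates) algebra

lemma inner_cross7_right: "(u \<times>\<^sub>7 v) \<bullet> v = 0"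
  by (simp add: cross7_coordinates) algebra

lemma inner_cross7_self: "(u \<times>\<^sub>7 v) \<bullet> (u \<times>\<^sub>7 v) = (u \<bullet> u) * (v \<bullet> v) - (u \<bullet> v)\<^sup>2"
  by (simp add: cross7_coordinates) algebra

lemma bilinear_cross7: "bilinear cross7"
  by (simp add: bilinear_def linear_iff vec7_eq_iff cross7_coordinates algebra_simps)

lemma cross7_self: "u \<times>\<^sub>7 u = 0"
  by (simp add: vec7_eq_iff cross7_coordinates)

lemma gram3_orthogonal_right:
  assumes "c \<bullet> u = 0" and "c \<bullet> v = 0"
  shows "gram3 u v c = (c \<bullet> c) * ((u \<bullet> u) * (v \<bullet> v) - (u \<bullet> v)\<^sup>2)"
  using assms by (simp add: gram3_def inner_commute power2_eq_square algebra_simps)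

lemma associative_plane_cross7: "associative_plane u v (u \<times>\<^sub>7 v)"
proof -
  let ?c = "u \<times>\<^sub>7 v"
  have "gram3 u v ?c = (?c \<bullet> ?c)\<^sup>2"
    by (simp add: gram3_orthogonal_right inner_cross7_left inner_cross7_right
        flip: inner_cross7_self power2_eq_square)
  then show ?thesis
    by (simp add: associative_plane_def phi_eq_inner_cross7)
qed

lemma alternating_bilinear_anticommute:
  assumes "bilinear f" and "\<And>u. f u u = 0"
  shows "f v u = - f u v"
proof -
  have "f (u + v) (u + v) = f u u + f u v + (f v u + f v v)"
    using assms(1) by (simp add: bilinear_ladd bilinear_radd)
  then have "f u v + f v u = 0" by (simp add: assms(2))
  then show ?thesis by (metis add_eq_0_iff)
qed

lemma alternating_bilinear_tangents:
  fixes f :: "'a::real_vector \<Rightarrow> 'a \<Rightarrow> 'b::real_vector"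
  assumes f: "bilinear f" and alt: "\<And>u. f u u = 0"
  shows "f (y1 *\<^sub>R w1 + y1 *\<^sub>R w2 + y2 *\<^sub>R w3 + w4) (y2 *\<^sub>R w1 - y2 *\<^sub>R w2 + y1 *\<^sub>R w3 + w5)
   = (1/2 * (y1\<^sup>2 + y2\<^sup>2)) *\<^sub>R (2 *\<^sub>R f w2 w3)
     + (1/2 * (y1\<^sup>2 - y2\<^sup>2)) *\<^sub>R (2 *\<^sub>R f w1 w3)
     + (y1 * y2) *\<^sub>R (- 2 *\<^sub>R f w1 w2)
     + y1 *\<^sub>R (f w1 w5 + f w2 w5 - f w3 w4)
     + y2 *\<^sub>R (- f w1 w4 + f w2 w4 + f w3 w5)
     + f w4 w5"
proof -
  note anticommute = alternating_bilinear_anticommute[OF f alt]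
  show ?thesis
    using anticommute[of w1 w2] anticommute[of w1 w3] anticommute[of w2 w3]
      anticommute[of w1 w4] anticommute[of w2 w4] anticommute[of w3 w4]
    by (simp add: f alt bilinear_ladd bilinear_radd bilinear_lsub bilinear_rsub bilinear_lmul
        bilinear_rmul algebra_simps power2_eq_square)
      (simp flip: scaleR_add_left)
qed

lemma has_derivative_compose_vector_derivative:
  assumes "\<And>t. (w has_vector_derivative w' t) (at t)"
      and "(g has_derivative g') (at x)"
  shows "((\<lambda>x. w (g x)) has_derivative (\<lambda>h. g' h *\<^sub>R w' (g x))) (at x)"
  using has_derivative_compose[OF assms(2)] assms(1) unfolding has_vector_derivative_def by blast

lemma has_derivative_quadratic_surface:
  fixes w1 w2 w3 w4 w5 w6 :: "real \<Rightarrow> 'a::real_normed_vector"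
  assumes "\<And>t. (w1 has_vector_derivative W1 t) (at t)"
      and "\<And>t. (w2 has_vector_derivative W2 t) (at t)"
      and "\<And>t. (w3 has_vector_derivative W3 t) (at t)"
      and "\<And>t. (w4 has_vector_derivative W4 t) (at t)"
      and "\<And>t. (w5 has_vector_derivative W5 t) (at t)"
      and "\<And>t. (w6 has_vector_derivative W6 t) (at t)"
  shows "((\<lambda>(y1::real, y2::real, t::real).
              (1/2 * (y1\<^sup>2 + y2\<^sup>2)) *\<^sub>R w1 t + (1/2 * (y1\<^sup>2 - y2\<^sup>2)) *\<^sub>R w2 t
              + (y1 * y2) *\<^sub>R w3 t + y1 *\<^sub>R w4 t + y2 *\<^sub>R w5 t + w6 t) has_derivative
   (\<lambda>(a, b, c). a *\<^sub>R (y1 *\<^sub>R w1 t + y1 *\<^sub>R w2 t + y2 *\<^sub>R w3 t + w4 t)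
            + b *\<^sub>R (y2 *\<^sub>R w1 t - y2 *\<^sub>R w2 t + y1 *\<^sub>R w3 t + w5 t)
            + c *\<^sub>R ((1/2 * (y1\<^sup>2 + y2\<^sup>2)) *\<^sub>R W1 t + (1/2 * (y1\<^sup>2 - y2\<^sup>2)) *\<^sub>R W2 t
              + (y1 * y2) *\<^sub>R W3 t + y1 *\<^sub>R W4 t + y2 *\<^sub>R W5 t + W6 t))) (at (y1, y2, t))"
proof -
  note w_chain = assms[THEN has_derivative_compose_vector_derivative]
  show ?thesis
    unfolding case_prod_beta
    by (rule has_derivative_eq_rhs, (rule derivative_eq_intros w_chain | simp)+)
      (simp add: fun_eq_iff algebra_simps add_divide_distrib diff_divide_distrib)
qed

theorem theorem5p3:
  fixes w1 w2 w3 w4 w5 w6 :: "real \<Rightarrow> real^7"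
  assumes d1: "\<And>t. (w1 has_vector_derivative 2 *\<^sub>R (w2 t \<times>\<^sub>7 w3 t)) (at t)"
      and d2: "\<And>t. (w2 has_vector_derivative 2 *\<^sub>R (w1 t \<times>\<^sub>7 w3 t)) (at t)"
      and d3: "\<And>t. (w3 has_vector_derivative - 2 *\<^sub>R (w1 t \<times>\<^sub>7 w2 t)) (at t)"
      and d4: "\<And>t. (w4 has_vector_derivative
                 (w1 t \<times>\<^sub>7 w5 t + w2 t \<times>\<^sub>7 w5 t - w3 t \<times>\<^sub>7 w4 t)) (at t)"
      and d5: "\<And>t. (w5 has_vector_derivative
                 (- (w1 t \<times>\<^sub>7 w4 t) + w2 t \<times>\<^sub>7 w4 t + w3 t \<times>\<^sub>7 w5 t)) (at t)"
      and d6: "\<And>t. (w6 has_vector_derivative (w4 t \<times>\<^sub>7 w5 t)) (at t)"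
  defines "F \<equiv> (\<lambda>(y1::real, y2::real, t::real).
              (1/2 * (y1\<^sup>2 + y2\<^sup>2)) *\<^sub>R w1 t + (1/2 * (y1\<^sup>2 - y2\<^sup>2)) *\<^sub>R w2 t
              + (y1 * y2) *\<^sub>R w3 t + y1 *\<^sub>R w4 t + y2 *\<^sub>R w5 t + w6 t)"
  assumes deriv: "(F has_derivative D) (at p)"
      and nonsing: "inj D"
  shows "associative_plane (D (1, 0, 0)) (D (0, 1, 0)) (D (0, 0, 1))"
proof -
  obtain y1 y2 t where p: "p = (y1, y2, t)" by (cases p)
  define A where "A = y1 *\<^sub>R w1 t + y1 *\<^sub>R w2 t + y2 *\<^sub>R w3 t + w4 t"
  define B where "B = y2 *\<^sub>R w1 t - y2 *\<^sub>R w2 t + y1 *\<^sub>R w3 t + w5 t"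
  have "(F has_derivative (\<lambda>(a, b, c). a *\<^sub>R A + b *\<^sub>R B + c *\<^sub>R (A \<times>\<^sub>7 B))) (at p)"
    using has_derivative_quadratic_surface[OF d1 d2 d3 d4 d5 d6, of y1 t y2]
    unfolding F_def p A_def B_def alternating_bilinear_tangents[OF bilinear_cross7 cross7_self] .
  then have "D = (\<lambda>(a, b, c). a *\<^sub>R A + b *\<^sub>R B + c *\<^sub>R (A \<times>\<^sub>7 B))"
    using deriv by (rule has_derivative_unique[rotated])
  then show ?thesis by (simp add: associative_plane_cross7)
qed

end
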